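(* Let $\Omega=(a,b)$ be a bounded interval, $\lambda\ge0$, $\mu\in(0,1]$ with $\mu\ne\frac12$, and $u\in H_0^\mu(\Omega)$. Then $$\|u\|_{L^2(\Omega)}\lesssim\left\|{}_a\mathbb{D}_x^{\mu,\lambda}u\right\|_{L^2(\Omega)}\quad\text{and}\quad\|u\|_{L^2(\Omega)}\lesssim\left\|{}_x\mathbb{D}_b^{\mu,\lambda}u\right\|_{L^2(\Omega)}.$$
   Context: For $n-1\le\mu<n$ ($n$ a positive integer) and $\lambda\ge0$, ${}_a\mathbb{D}_x^{\mu,\lambda}u(x)=\frac{e^{-\lambda x}}{\Gamma(n-\mu)}\frac{d^n}{dx^n}\int_a^x\frac{e^{\lambda\xi}u(\xi)}{(x-\xi)^{\mu-n+1}}d\xi$ and ${}_x\mathbb{D}_b^{\mu,\lambda}u(x)=\frac{(-1)^ne^{\lambda x}}{\Gamma(n-\mu)}\frac{d^n}{dx^n}\int_x^b\frac{e^{-\lambda\xi}u(\xi)}{(\xi-x)^{\mu-n+1}}d\xi$, defined on $C_0^\infty(\Omega)$ and extended by continuity to bounded operators $H_0^\mu(\Omega)\to L^2(\Omega)$ for $0<\mu\le1$. $H_0^\mu(\Omega)$ is the closure of $C_0^\infty(\Omega)$ in the fractional Sobolev norm $\|u\|^2_{H^\mu(\Omega)}=\|u\|^2_{L^2(\Omega)}+\inf_{\tilde u|_\Omega=u}\int_{\mathbb R}|\omega|^{2\mu}|\mathscr F[\tilde u](\omega)|^2d\omega$, $\mathscr{F}[u](\omega)=\int_{\mathbb R}e^{-i\omega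 x}u(x)dx$. Notation: $A\lesssim B$ means $A\le CB$ with $C$ independent of $u$. *)

theory Defs
  imports "HOL-Analysis.Analysis"
begin

definition test_fun :: "real \<Rightarrow> real \<Rightarrow> (real \<Rightarrow> real) set" where
  "test_fun a b = {f. (\<forall>k x. ((deriv ^^ k) f) differentiable (at x)) \<and>
                      (\<exists>c d. a < c \<and> d < b \<and> (\<forall>x. x \<notin> {c..d} \<longrightarrow> f x = 0))}"

definition L2sq :: "real \<Rightarrow> real \<Rightarrow> (real \<Rightarrow> real) \<Rightarrow> ennreal" where
  "L2sq a b f = (\<integral>\<^sup>+ x. indicator {a<..<b} x * ennreal ((f x)\<^sup>2) \<partial>lborel)"

definition fourier :: "(real \<Rightarrow> real) \<Rightarrow> real \<Rightarrow> complex" where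
  "fourier u w = (LINT x|lborel. cis (- w * x) * complex_of_real (u x))"

definition extensions :: "real \<Rightarrow> real \<Rightarrow> (real \<Rightarrow> real) \<Rightarrow> (real \<Rightarrow> real) set" where
  "extensions a b w = {v. v \<in> borel_measurable lborel \<and> integrable lborel v \<and>
       (\<integral>\<^sup>+ x. ennreal ((v x)\<^sup>2) \<partial>lborel) < \<infinity> \<and>
       (AE x in lborel. x \<in> {a<..<b} \<longrightarrow> v x = w x)}"

definition Hsq :: "real \<Rightarrow> real \<Rightarrow> real \<Rightarrow> (real \<Rightarrow> real) \<Rightarrow> ennreal" where
  "Hsq a b \<mu> w = L2sq a b w +
     (INF v \<in> extensions a b w.
        \<integral>\<^sup>+ \<omega>. ennreal (\<bar>\<omega>\<bar> powr (2 * \<mu>) * (cmod (fourier v \<omega>))\<^sup>2) \<partial>lborel)"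

definition ord_n :: "real \<Rightarrow> nat" where
  "ord_n \<mu> = nat \<lfloor>\<mu>\<rfloor> + 1"

definition DL :: "real \<Rightarrow> real \<Rightarrow> real \<Rightarrow> (real \<Rightarrow> real) \<Rightarrow> real \<Rightarrow> real" where
  "DL a \<mu> lam u x = exp (- lam * x) / Gamma (real (ord_n \<mu>) - \<mu>) *
     (deriv ^^ ord_n \<mu>) (\<lambda>y. LBINT \<xi>=a..y. exp (lam * \<xi>) * u \<xi> / (y - \<xi>) powr (\<mu> - real (ord_n \<mu>) + 1)) x"

definition DR :: "real \<Rightarrow> real \<Rightarrow> real \<Rightarrow> (real \<Rightarrow> real) \<Rightarrow> real \<Rightarrow> real" where
  "DR b \<mu> lam u x = (-1) ^ ord_n \<mu> * exp (lam * x) / Gamma (real (ord_n \<mu>) - \<mu>) *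
     (deriv ^^ ord_n \<mu>) (\<lambda>y. LBINT \<xi>=y..b. exp (- lam * \<xi>) * u \<xi> / (\<xi> - y) powr (\<mu> - real (ord_n \<mu>) + 1)) x"

definition L2 :: "real \<Rightarrow> real \<Rightarrow> (real \<Rightarrow> real) set" where
  "L2 a b = {f. (\<lambda>x. indicator {a<..<b} x * f x) \<in> borel_measurable lborel \<and> L2sq a b f < \<infinity>}"

definition H0 :: "real \<Rightarrow> real \<Rightarrow> real \<Rightarrow> (real \<Rightarrow> real) set" where
  "H0 a b \<mu> = {u. u \<in> L2 a b \<and> (\<exists>\<phi>. (\<forall>k. \<phi> k \<in> test_fun a b) \<and>
                   (\<lambda>k. Hsq a b \<mu> (\<lambda>x. \<phi> k x - u x)) \<longlonglongrightarrow> 0)}"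

text \<open>v is the value at u of the continuous extension of the operator D (given on test
  functions) from H_0^mu to L2: the L2-limit of D(phi_k) for any test sequence phi_k -> u in H^mu.\<close>
definition ext_value :: "real \<Rightarrow> real \<Rightarrow> real \<Rightarrow> ((real \<Rightarrow> real) \<Rightarrow> real \<Rightarrow> real)
     \<Rightarrow> (real \<Rightarrow> real) \<Rightarrow> (real \<Rightarrow> real) \<Rightarrow> bool" where
  "ext_value a b \<mu> D u v \<longleftrightarrow> v \<in> L2 a b \<and>
     (\<forall>\<phi>. (\<forall>k. \<phi> k \<in> test_fun a b) \<and> (\<lambda>k. Hsq a b \<mu> (\<lambda>x. \<phi> k x - u x)) \<longlonglongrightarrow> 0
        \<longrightarrow> (\<lambda>k. L2sq a b (\<lambda>x. D (\<phi> k) x - v x)) \<longlonglongrightarrow> 0)"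

end

theory Submission
  imports Defs
begin

text \<open>For a test function \<open>\<phi>\<close> put \<open>h x = exp (\<lambda> x) \<phi> x\<close>. The integral inside the left derivative is
  the convolution of \<open>h\<close> with \<open>t^(\<mu> - n + 1)\<close> on \<open>t > 0\<close>; it commutes with differentiation, so its
  \<open>n\<close>-th derivative \<open>g\<close> is the convolution of \<open>h'\<close> with \<open>t^(-\<mu>)\<close> (and simply \<open>h'\<close> when \<open>\<mu> = 1\<close>).
  Convolving \<open>g\<close> once more with \<open>t^(\<mu> - 1)\<close> returns \<open>B(\<mu>, 1 - \<mu>) h\<close> by Abel's inversion formula, so
  Young's inequality on \<open>(a, b)\<close> bounds \<open>\<Parallel>h\<Parallel>\<close> by \<open>\<Parallel>g\<Parallel>\<close>; the exponential weights are bounded above and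
  below on \<open>(a, b)\<close>, which gives \<open>\<Parallel>\<phi>\<Parallel> \<lesssim> \<Parallel>D \<phi>\<Parallel>\<close> for test functions. The right derivative is the left one
  conjugated by \<open>x \<mapsto> -x\<close>. Finally the estimate passes to \<open>H_0^\<mu>\<close> along approximating test sequences,
  because the \<open>L2\<close> norm is dominated by the \<open>H^\<mu>\<close> norm.\<close>

section \<open>The Riemann--Liouville kernel\<close>

definition rl_kernel :: "real \<Rightarrow> real \<Rightarrow> real" where
  "rl_kernel e t = (if 0 < t then t powr (- e) else 0)"

lemma rl_kernel_measurable [measurable]: "rl_kernel e \<in> borel_measurable borel"
  unfolding rl_kernel_def by measurable

lemma rl_kernel_nonneg: "0 \<le> rl_kernel e t"
  by (simp add: rl_kernel_def)

lemma nn_integral_rl_kernel: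
  assumes "0 \<le> e" "e < 1" "0 \<le> R"
  shows "(\<integral>\<^sup>+t. ennreal (indicator {0<..R} t * rl_kernel e t) \<partial>lborel) = ennreal (R powr (1 - e) / (1 - e))"
proof -
  have "(\<integral>\<^sup>+t. ennreal (indicator {0..R} t * t powr (- e)) \<partial>lborel) = ennreal (R powr (- e + 1) / (- e + 1))"
    by (rule nn_integral_has_integral_lebesgue[OF _ has_integral_powr_from_0]) (use assms in auto)
  moreover have "(\<integral>\<^sup>+t. ennreal (indicator {0<..R} t * rl_kernel e t) \<partial>lborel)
      = (\<integral>\<^sup>+t. ennreal (indicator {0..R} t * t powr (- e)) \<partial>lborel)"
    by (intro nn_integral_cong) (auto simp: rl_kernel_def indicator_def)
  ultimately show ?thesis by (simp add: add.commute)
qed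

lemma integrable_rl_kernel:
  assumes "0 \<le> e" "e < 1" "0 \<le> R"
  shows "integrable lborel (\<lambda>t. indicator {0<..R} t * rl_kernel e t)"
proof (rule integrableI_bounded)
  have "(\<integral>\<^sup>+t. ennreal (norm (indicator {0<..R} t * rl_kernel e t)) \<partial>lborel)
      = (\<integral>\<^sup>+t. ennreal (indicator {0<..R} t * rl_kernel e t) \<partial>lborel)"
    by (intro nn_integral_cong) (auto simp: rl_kernel_nonneg)
  then show "(\<integral>\<^sup>+t. ennreal (norm (indicator {0<..R} t * rl_kernel e t)) \<partial>lborel) < \<infinity>"
    using nn_integral_rl_kernel[OF assms] by simp
qed measurable

lemma integral_rl_kernel:
  assumes "0 \<le> e" "e < 1" "0 \<le> R"
  shows "(\<integral>t. indicator {0<..R} t * rl_kernel e t \<partial>lborel) = R powr (1 - e) / (1 - e)"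
proof -
  have "ennreal (\<integral>t. indicator {0<..R} t * rl_kernel e t \<partial>lborel)
      = (\<integral>\<^sup>+t. ennreal (indicator {0<..R} t * rl_kernel e t) \<partial>lborel)"
    by (rule nn_integral_eq_integral[symmetric])
       (use integrable_rl_kernel[OF assms] in \<open>auto simp: rl_kernel_nonneg\<close>)
  also have "\<dots> = ennreal (R powr (1 - e) / (1 - e))" by (rule nn_integral_rl_kernel[OF assms])
  finally show ?thesis
    by (subst (asm) ennreal_inj) (use assms in \<open>auto intro!: integral_nonneg_AE simp: rl_kernel_nonneg\<close>)
qed

lemma dominated_by_rl_kernel:
  assumes [measurable]: "h \<in> borel_measurable lborel" and "0 \<le> e" "e < 1" "0 \<le> R" "0 \<le> C"
    and bound: "\<And>t. \<bar>h t\<bar> \<le> C * (indicator {0<..R} t * rl_kernel e t)"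
  shows "integrable lborel h" "\<bar>\<integral>t. h t \<partial>lborel\<bar> \<le> C * (R powr (1 - e) / (1 - e))"
proof -
  have int_bound: "integrable lborel (\<lambda>t. C * (indicator {0<..R} t * rl_kernel e t))"
    using integrable_rl_kernel[OF assms(2-4)] by simp
  show h_int: "integrable lborel h"
  proof (rule Bochner_Integration.integrable_bound[OF int_bound])
    show "AE x in lborel. norm (h x) \<le> norm (C * (indicator {0<..R} x * rl_kernel e x))"
      using bound assms(5) by (intro AE_I2) (simp add: abs_of_nonneg rl_kernel_nonneg)
  qed simp
  have "\<bar>\<integral>t. h t \<partial>lborel\<bar> \<le> (\<integral>t. \<bar>h t\<bar> \<partial>lborel)"
    using integral_norm_bound[of lborel h] by simp
  also have "\<dots> \<le> (\<integral>t. C * (indicator {0<..R} t * rl_kernel e t) \<partial>lborel)"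
    by (intro integral_mono h_int int_bound integrable_abs bound)
  also have "\<dots> = C * (R powr (1 - e) / (1 - e))"
    using integral_rl_kernel[OF assms(2-4)] by simp
  finally show "\<bar>\<integral>t. h t \<partial>lborel\<bar> \<le> C * (R powr (1 - e) / (1 - e))" .
qed

text \<open>\<open>rl_conv e f\<close> is \<open>\<Gamma>(1 - e)\<close> times the Riemann--Liouville integral of order \<open>1 - e\<close> of \<open>f\<close>
  based at \<open>-\<infinity>\<close>; for \<open>e = 0\<close> it is the primitive of \<open>f\<close>.\<close>
definition rl_conv :: "real \<Rightarrow> (real \<Rightarrow> real) \<Rightarrow> real \<Rightarrow> real" where
  "rl_conv e f y = (\<integral>t. f (y - t) * rl_kernel e t \<partial>lborel)"

lemma integrable_rl_conv_integrand:
  assumes [measurable]: "f \<in> borel_measurable borel" and "0 \<le> e" "e < 1"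
    and bound: "\<And>x. \<bar>f x\<bar> \<le> M" and vanish: "\<And>x. x < c \<Longrightarrow> f x = 0"
  shows "integrable lborel (\<lambda>t. f (y - t) * rl_kernel e t)"
proof -
  have M: "0 \<le> M" using bound[of 0] by simp
  have dom: "\<bar>f (y - t) * rl_kernel e t\<bar> \<le> M * (indicator {0<..max 0 (y - c)} t * rl_kernel e t)" for t
  proof (cases "0 < t \<and> t \<le> max 0 (y - c)")
    case True
    then show ?thesis using bound[of "y - t"] by (simp add: abs_mult rl_kernel_nonneg mult_right_mono)
  next
    case False
    then have "t \<le> 0 \<or> y - t < c" by auto
    then show ?thesis using False vanish[of "y - t"] M by (auto simp: rl_kernel_def indicator_def)
  qed
  show ?thesis
    by (rule dominated_by_rl_kernel(1)[OF _ assms(2,3) _ M dom]) simp_all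
qed

lemma continuous_on_UNIV_if_DERIV:
  "(\<And>x. (f has_real_derivative f' x) (at x)) \<Longrightarrow> continuous_on UNIV f"
  by (meson DERIV_isCont continuous_at_imp_continuous_on)

lemma abs_taylor_remainder_le:
  assumes d1: "\<And>x. (f has_real_derivative f1 x) (at x)"
    and d2: "\<And>x. (f1 has_real_derivative f2 x) (at x)" and bound: "\<And>x. \<bar>f2 x\<bar> \<le> M"
  shows "\<bar>f (x + h) - f x - h * f1 x\<bar> \<le> M * h\<^sup>2"
proof -
  have lipschitz: "\<bar>f1 u - f1 v\<bar> \<le> M * \<bar>u - v\<bar>" for u v
    using field_differentiable_bound[of UNIV f1 f2 M u v] d2 bound by simp
  obtain z where z: "\<bar>z - x\<bar> \<le> \<bar>h\<bar>" and mvt: "f (x + h) - f x = h * f1 z"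
  proof (cases h "0::real" rule: linorder_cases)
    case greater
    then obtain z where "x < z" "z < x + h" "f (x + h) - f x = (x + h - x) * f1 z"
      using MVT2[of x "x + h" f f1] d1 by auto
    then show ?thesis using that[of z] by auto
  next
    case less
    then obtain z where "x + h < z" "z < x" "f x - f (x + h) = (x - (x + h)) * f1 z"
      using MVT2[of "x + h" x f f1] d1 by auto
    then show ?thesis using that[of z] by (auto simp: algebra_simps)
  qed (use that[of x] in simp)
  have "\<bar>f (x + h) - f x - h * f1 x\<bar> = \<bar>h\<bar> * \<bar>f1 z - f1 x\<bar>"
    by (simp add: mvt abs_mult flip: right_diff_distrib)
  also have "\<dots> \<le> \<bar>h\<bar> * (M * \<bar>h\<bar>)"
    using lipschitz[of z x] z bound[of 0]
    by (intro mult_left_mono) (auto intro: order_trans[OF _ mult_left_mono[OF z]])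
  finally show ?thesis by (simp add: power2_eq_square mult_ac)
qed

lemma abs_rl_conv_increment_le:
  assumes d1: "\<And>x. (f has_real_derivative f1 x) (at x)"
    and d2: "\<And>x. (f1 has_real_derivative f2 x) (at x)"
    and b0: "\<And>x. \<bar>f x\<bar> \<le> M0" and b1: "\<And>x. \<bar>f1 x\<bar> \<le> M1" and b2: "\<And>x. \<bar>f2 x\<bar> \<le> M2"
    and z0: "\<And>x. x < c \<Longrightarrow> f x = 0" and z1: "\<And>x. x < c \<Longrightarrow> f1 x = 0"
    and e: "0 \<le> e" "e < 1" and h: "\<bar>h\<bar> < 1"
  shows "\<bar>rl_conv e f (y + h) - rl_conv e f y - h * rl_conv e f1 y\<bar>
           \<le> M2 * h\<^sup>2 * (max 0 (y + 1 - c) powr (1 - e) / (1 - e))"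
proof -
  have [measurable]: "f \<in> borel_measurable borel" "f1 \<in> borel_measurable borel"
    using continuous_on_UNIV_if_DERIV[OF d1] continuous_on_UNIV_if_DERIV[OF d2]
    by (auto intro: borel_measurable_continuous_onI)
  have M2: "0 \<le> M2" using b2[of 0] by simp
  define R where "R = max 0 (y + 1 - c)"
  have int0: "integrable lborel (\<lambda>t. f (z - t) * rl_kernel e t)" for z
    by (rule integrable_rl_conv_integrand[OF _ e b0 z0]) simp
  have int1: "integrable lborel (\<lambda>t. f1 (z - t) * rl_kernel e t)" for z
    by (rule integrable_rl_conv_integrand[OF _ e b1 z1]) simp
  define D where "D t = (f (y + h - t) - f (y - t) - h * f1 (y - t)) * rl_kernel e t" for t
  have "(\<integral>t. D t \<partial>lborel) = (\<integral>t. f (y + h - t) * rl_kernel e t - f (y - t) * rl_kernel e t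
                                  - h * (f1 (y - t) * rl_kernel e t) \<partial>lborel)"
    by (intro Bochner_Integration.integral_cong) (auto simp: D_def algebra_simps)
  also have "\<dots> = rl_conv e f (y + h) - rl_conv e f y - h * rl_conv e f1 y"
    unfolding rl_conv_def using int0 int1
    by (subst Bochner_Integration.integral_diff;
        (intro Bochner_Integration.integrable_diff integrable_mult_right)?; simp?)+
  finally have D_eq: "(\<integral>t. D t \<partial>lborel) = rl_conv e f (y + h) - rl_conv e f y - h * rl_conv e f1 y" .
  have D_bound: "\<bar>D t\<bar> \<le> M2 * h\<^sup>2 * (indicator {0<..R} t * rl_kernel e t)" for t
  proof (cases "0 < t \<and> t \<le> R")
    case True
    have "\<bar>f (y - t + h) - f (y - t) - h * f1 (y - t)\<bar> \<le> M2 * h\<^sup>2"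
      by (rule abs_taylor_remainder_le[OF d1 d2 b2])
    moreover have "y - t + h = y + h - t" by simp
    ultimately have "\<bar>f (y + h - t) - f (y - t) - h * f1 (y - t)\<bar> \<le> M2 * h\<^sup>2" by metis
    then show ?thesis using True by (simp add: D_def abs_mult rl_kernel_nonneg mult_right_mono)
  next
    case False
    then have "t \<le> 0 \<or> (y + h - t < c \<and> y - t < c)" using h by (auto simp: R_def)
    then show ?thesis using False z0 z1 by (auto simp: D_def rl_kernel_def indicator_def)
  qed
  have "\<bar>\<integral>t. D t \<partial>lborel\<bar> \<le> M2 * h\<^sup>2 * (R powr (1 - e) / (1 - e))"
    by (rule dominated_by_rl_kernel(2)[OF _ e _ _ D_bound]) (auto simp: D_def R_def M2)
  then show ?thesis by (simp add: D_eq R_def)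
qed

lemma has_real_derivative_rl_conv:
  assumes d1: "\<And>x. (f has_real_derivative f1 x) (at x)"
    and d2: "\<And>x. (f1 has_real_derivative f2 x) (at x)"
    and b0: "\<And>x. \<bar>f x\<bar> \<le> M0" and b1: "\<And>x. \<bar>f1 x\<bar> \<le> M1" and b2: "\<And>x. \<bar>f2 x\<bar> \<le> M2"
    and z0: "\<And>x. x < c \<Longrightarrow> f x = 0" and z1: "\<And>x. x < c \<Longrightarrow> f1 x = 0"
    and e: "0 \<le> e" "e < 1"
  shows "(rl_conv e f has_real_derivative rl_conv e f1 y) (at y)"
proof -
  define K where "K = M2 * (max 0 (y + 1 - c) powr (1 - e) / (1 - e))"
  have quotient: "\<bar>(rl_conv e f (y + h) - rl_conv e f y) / h - rl_conv e f1 y\<bar> \<le> K * \<bar>h\<bar>"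
    if "h \<noteq> 0" "\<bar>h\<bar> < 1" for h
  proof -
    have "(rl_conv e f (y + h) - rl_conv e f y) / h - rl_conv e f1 y
        = (rl_conv e f (y + h) - rl_conv e f y - h * rl_conv e f1 y) / h"
      using that by (simp add: field_simps)
    then have "\<bar>(rl_conv e f (y + h) - rl_conv e f y) / h - rl_conv e f1 y\<bar>
        = \<bar>rl_conv e f (y + h) - rl_conv e f y - h * rl_conv e f1 y\<bar> / \<bar>h\<bar>"
      by (simp add: abs_divide)
    also have "\<dots> \<le> K * h\<^sup>2 / \<bar>h\<bar>"
      using abs_rl_conv_increment_le[OF d1 d2 b0 b1 b2 z0 z1 e that(2), where y = y]
      by (intro divide_right_mono) (simp_all add: K_def mult_ac)
    also have "\<dots> = K * \<bar>h\<bar>"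
      using that(1) by (simp add: power2_eq_square abs_mult_self_eq[symmetric, of h] del: abs_mult_self_eq)
    finally show ?thesis .
  qed
  have "((\<lambda>h. (rl_conv e f (y + h) - rl_conv e f y) / h - rl_conv e f1 y) \<longlongrightarrow> 0) (at 0)"
  proof (rule Lim_null_comparison)
    show "\<forall>\<^sub>F h in at 0. norm ((rl_conv e f (y + h) - rl_conv e f y) / h - rl_conv e f1 y) \<le> K * \<bar>h\<bar>"
      unfolding eventually_at by (rule exI[of _ 1]) (auto intro!: quotient simp: dist_real_def)
    show "((\<lambda>h. K * \<bar>h\<bar>) \<longlongrightarrow> 0) (at (0::real))"
      by (intro tendsto_eq_intros) auto
  qed
  then show ?thesis unfolding DERIV_def by (rule LIM_zero_cancel)
qed

lemma rl_conv_0_deriv: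
  assumes d1: "\<And>x. (f has_real_derivative f1 x) (at x)" and c1: "continuous_on UNIV f1"
    and z0: "\<And>x. x < c \<Longrightarrow> f x = 0" and z1: "\<And>x. x < c \<Longrightarrow> f1 x = 0"
  shows "rl_conv 0 f1 y = f y"
proof -
  define R where "R = max 1 (y - c + 1)"
  have R: "0 < R" by (simp add: R_def)
  have "rl_conv 0 f1 y = (\<integral>t. indicator {0<..<R} t * f1 (y - t) \<partial>lborel)"
    unfolding rl_conv_def
    by (intro Bochner_Integration.integral_cong refl)
       (use z1 in \<open>auto simp: rl_kernel_def indicator_def R_def\<close>)
  also have "\<dots> = \<bar>-1\<bar> *\<^sub>R (\<integral>x. indicator {0<..<R} (y + (-1) * x) * f1 (y - (y + (-1) * x)) \<partial>lborel)"
    by (rule lborel_integral_real_affine) simp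
  also have "\<dots> = (\<integral>x. indicator {0<..<R} (y + (-1) * x) * f1 (y - (y + (-1) * x)) \<partial>lborel)"
    by simp
  also have "\<dots> = (\<integral>x. indicator {y - R<..<y} x *\<^sub>R f1 x \<partial>lborel)"
    by (intro Bochner_Integration.integral_cong refl) (auto simp: indicator_def)
  also have "\<dots> = (LBINT x=y-R..y. f1 x)"
    using R by (simp add: interval_lebesgue_integral_le_eq set_lebesgue_integral_def)
  also have "\<dots> = f y - f (y - R)"
  proof (rule interval_integral_FTC_finite)
    show "continuous_on {min (y - R) y..max (y - R) y} f1"
      using c1 by (rule continuous_on_subset) simp
    fix x show "(f has_vector_derivative f1 x) (at x within {min (y - R) y..max (y - R) y})"
      using d1[of x]
      by (simp add: has_real_derivative_iff_has_vector_derivative has_vector_derivative_at_within)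
  qed
  also have "f (y - R) = 0" by (rule z0) (simp add: R_def)
  finally show ?thesis by simp
qed

text \<open>At \<open>u = 0\<close> and \<open>u = 1\<close> both sides vanish, the right one because \<open>0 powr x = 0\<close>.\<close>
lemma rl_kernel_pair_rescale:
  assumes "0 < r"
  shows "r * (rl_kernel \<mu> (r - r * u) * rl_kernel (1 - \<mu>) (r * u))
           = indicator {0..1} u *\<^sub>R (u powr (\<mu> - 1) * (1 - u) powr ((1 - \<mu>) - 1))"
proof (cases "0 < u \<and> u < 1")
  case True
  have "r * (rl_kernel \<mu> (r - r * u) * rl_kernel (1 - \<mu>) (r * u))
      = r * ((r * (1 - u)) powr (- \<mu>) * (r * u) powr (\<mu> - 1))"
    using True assms by (simp add: rl_kernel_def right_diff_distrib)
  also have "\<dots> = (r powr 1 * r powr (- \<mu>) * r powr (\<mu> - 1)) * (u powr (\<mu> - 1) * (1 - u) powr (- \<mu>))"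
    using True assms by (simp add: powr_mult mult_ac)
  also have "r powr 1 * r powr (- \<mu>) * r powr (\<mu> - 1) = r powr (1 + (- \<mu>) + (\<mu> - 1))"
    by (simp only: powr_add)
  also have "\<dots> = 1" using assms by simp
  finally show ?thesis using True by (simp add: indicator_def)
next
  case False
  then consider "u \<le> 0" | "1 \<le> u" by linarith
  then show ?thesis
  proof cases
    case 1
    then have "r * u \<le> 0" using assms by (simp add: mult_nonneg_nonpos)
    then show ?thesis using 1 by (auto simp: rl_kernel_def indicator_def)
  next
    case 2
    then have "r - r * u \<le> 0" using assms by (simp add: mult_nonneg_nonpos flip: right_diff_distrib)
    then show ?thesis using 2 by (auto simp: rl_kernel_def indicator_def)
  qed
qed

lemma integral_rl_kernel_convolution:
  assumes "0 < \<mu>" "\<mu> < 1" and "0 < r"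
  shows "(\<integral>s. rl_kernel \<mu> (r - s) * rl_kernel (1 - \<mu>) s \<partial>lborel) = Beta \<mu> (1 - \<mu>)"
proof -
  have "(\<integral>s. rl_kernel \<mu> (r - s) * rl_kernel (1 - \<mu>) s \<partial>lborel)
      = \<bar>r\<bar> *\<^sub>R (\<integral>u. rl_kernel \<mu> (r - (0 + r * u)) * rl_kernel (1 - \<mu>) (0 + r * u) \<partial>lborel)"
    by (rule lborel_integral_real_affine) (use assms in simp)
  also have "\<dots> = (\<integral>u. r * (rl_kernel \<mu> (r - r * u) * rl_kernel (1 - \<mu>) (r * u)) \<partial>lborel)"
    using assms by simp
  also have "\<dots> = (\<integral>u. indicator {0..1} u *\<^sub>R (u powr (\<mu> - 1) * (1 - u) powr ((1 - \<mu>) - 1)) \<partial>lborel)"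
    using rl_kernel_pair_rescale[OF assms(3)] by simp
  also have "\<dots> = integral {0..1} (\<lambda>u. u powr (\<mu> - 1) * (1 - u) powr ((1 - \<mu>) - 1))"
    using set_borel_integral_eq_integral(2)[OF integrable_Beta[of \<mu> "1 - \<mu>"]] assms
    by (simp add: set_lebesgue_integral_def)
  also have "\<dots> = Beta \<mu> (1 - \<mu>)"
    by (rule integral_unique[OF has_integral_Beta_real]) (use assms in auto)
  finally show ?thesis .
qed

lemma nn_integral_lborel_shift:
  fixes g :: "real \<Rightarrow> real"
  assumes [measurable]: "g \<in> borel_measurable borel"
  shows "(\<integral>\<^sup>+r. ennreal (g (r - s)) \<partial>lborel) = (\<integral>\<^sup>+x. ennreal (g x) \<partial>lborel)"
  using nn_integral_real_affine[of "\<lambda>x. ennreal (g (x - s))" 1 s] by simp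

lemma integrable_rl_kernel_double_convolution:
  assumes [measurable]: "f \<in> borel_measurable borel" and bound: "\<And>x. \<bar>f x\<bar> \<le> M"
    and vanish: "\<And>x. x < c \<Longrightarrow> f x = 0" and "0 < \<mu>" "\<mu> < 1"
  shows "integrable (lborel \<Otimes>\<^sub>M lborel) (\<lambda>(r, s). f (y - r) * rl_kernel \<mu> (r - s) * rl_kernel (1 - \<mu>) s)"
proof (rule integrableI_bounded)
  define R where "R = max 0 (y - c)"
  define A where "A x = indicator {0<..R} x * rl_kernel \<mu> x" for x
  define B where "B x = indicator {0<..R} x * rl_kernel (1 - \<mu>) x" for x
  have [measurable]: "A \<in> borel_measurable borel" "B \<in> borel_measurable borel"
    unfolding A_def B_def by measurable
  have M: "0 \<le> M" using bound[of 0] by simp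
  have AB_nonneg: "0 \<le> A x" "0 \<le> B x" for x by (simp_all add: A_def B_def rl_kernel_nonneg)
  have dom: "norm (f (y - r) * rl_kernel \<mu> (r - s) * rl_kernel (1 - \<mu>) s) \<le> M * A (r - s) * B s" for r s
  proof (cases "f (y - r) * rl_kernel \<mu> (r - s) * rl_kernel (1 - \<mu>) s = 0")
    case True
    have "0 \<le> M * A (r - s) * B s" using AB_nonneg M by simp
    then show ?thesis by (subst True) simp
  next
    case False
    then have "0 < r - s" "0 < s" "c \<le> y - r"
      using vanish[of "y - r"] by (auto simp: rl_kernel_def split: if_splits) (meson not_le)
    then have "r - s \<in> {0<..R}" "s \<in> {0<..R}" by (auto simp: R_def)
    then show ?thesis using bound[of "y - r"]
      by (simp add: A_def B_def abs_mult rl_kernel_nonneg mult_right_mono)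
  qed
  define K where "K = R powr (1 - \<mu>) / (1 - \<mu>)"
  have K: "0 \<le> K" using assms by (simp add: K_def)
  have A_int: "(\<integral>\<^sup>+r. ennreal (A (r - s)) \<partial>lborel) = ennreal K" for s
    using nn_integral_lborel_shift[of A s] nn_integral_rl_kernel[of \<mu> R] assms
    by (simp add: A_def R_def K_def)
  have "(\<integral>\<^sup>+z. ennreal (norm ((\<lambda>(r, s). f (y - r) * rl_kernel \<mu> (r - s) * rl_kernel (1 - \<mu>) s) z))
            \<partial>(lborel \<Otimes>\<^sub>M lborel))
      \<le> (\<integral>\<^sup>+z. ennreal ((\<lambda>(r, s). M * A (r - s) * B s) z) \<partial>(lborel \<Otimes>\<^sub>M lborel))"
    using dom
    by (intro nn_integral_mono) (auto intro!: ennreal_leI simp del: norm_mult simp: case_prod_beta)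
  also have "\<dots> = (\<integral>\<^sup>+s. \<integral>\<^sup>+r. ennreal (M * B s) * ennreal (A (r - s)) \<partial>lborel \<partial>lborel)"
    by (subst lborel_pair.nn_integral_snd[symmetric])
       (auto simp: case_prod_beta ennreal_mult'[symmetric] AB_nonneg M mult_ac)
  also have "\<dots> = (\<integral>\<^sup>+s. ennreal (B s) * ennreal (M * K) \<partial>lborel)"
  proof (intro nn_integral_cong)
    fix s
    have "(\<lambda>r. ennreal (A (r - s))) \<in> borel_measurable lborel" by measurable
    then have "(\<integral>\<^sup>+r. ennreal (M * B s) * ennreal (A (r - s)) \<partial>lborel) = ennreal (M * B s) * ennreal K"
      by (simp only: nn_integral_cmult A_int)
    also have "\<dots> = ennreal (B s) * ennreal (M * K)"
      using AB_nonneg M K by (simp add: mult_ac flip: ennreal_mult)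
    finally show "(\<integral>\<^sup>+r. ennreal (M * B s) * ennreal (A (r - s)) \<partial>lborel) = ennreal (B s) * ennreal (M * K)" .
  qed
  also have "\<dots> = (\<integral>\<^sup>+s. ennreal (B s) \<partial>lborel) * ennreal (M * K)"
    by (rule nn_integral_multc) measurable
  also have "\<dots> < \<infinity>"
    using nn_integral_rl_kernel[of "1 - \<mu>" R] assms by (simp add: B_def R_def ennreal_mult_less_top)
  finally show "(\<integral>\<^sup>+z. ennreal (norm ((\<lambda>(r, s). f (y - r) * rl_kernel \<mu> (r - s) * rl_kernel (1 - \<mu>) s) z))
            \<partial>(lborel \<Otimes>\<^sub>M lborel)) < \<infinity>" .
qed measurable

text \<open>Abel's inversion formula, i.e.\ the semigroup law \<open>I^(1 - \<mu>) I^\<mu> = I^1\<close> of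
  Riemann--Liouville integrals in the normalisation of \<open>rl_conv\<close>.\<close>
lemma rl_conv_Abel_inversion:
  assumes d1: "\<And>x. (f has_real_derivative f1 x) (at x)" and c1: "continuous_on UNIV f1"
    and b1: "\<And>x. \<bar>f1 x\<bar> \<le> M1"
    and z0: "\<And>x. x < c \<Longrightarrow> f x = 0" and z1: "\<And>x. x < c \<Longrightarrow> f1 x = 0"
    and \<mu>: "0 < \<mu>" "\<mu> < 1"
  shows "rl_conv (1 - \<mu>) (rl_conv \<mu> f1) y = Beta \<mu> (1 - \<mu>) * f y"
proof -
  have [measurable]: "f1 \<in> borel_measurable borel" using c1 by (rule borel_measurable_continuous_onI)
  define H where "H r s = f1 (y - r) * rl_kernel \<mu> (r - s) * rl_kernel (1 - \<mu>) s" for r s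
  have inner: "rl_conv \<mu> f1 (y - s) * rl_kernel (1 - \<mu>) s = (\<integral>r. H r s \<partial>lborel)" for s
  proof -
    have "rl_conv \<mu> f1 (y - s)
        = \<bar>1\<bar> *\<^sub>R (\<integral>r. f1 (y - s - (- s + 1 * r)) * rl_kernel \<mu> (- s + 1 * r) \<partial>lborel)"
      unfolding rl_conv_def by (rule lborel_integral_real_affine) simp
    then show ?thesis by (simp add: H_def)
  qed
  have kernel: "(\<integral>s. H r s \<partial>lborel) = Beta \<mu> (1 - \<mu>) * (f1 (y - r) * rl_kernel 0 r)" for r
  proof (cases "0 < r")
    case True
    then show ?thesis
      using integral_rl_kernel_convolution[OF \<mu> True] by (simp add: H_def rl_kernel_def mult.assoc)
  next
    case False
    then have "(\<lambda>s. H r s) = (\<lambda>s. 0)" by (auto simp: H_def rl_kernel_def)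
    then show ?thesis using False by (simp add: rl_kernel_def)
  qed
  have "rl_conv (1 - \<mu>) (rl_conv \<mu> f1) y = (\<integral>s. (\<integral>r. H r s \<partial>lborel) \<partial>lborel)"
    unfolding rl_conv_def[of "1 - \<mu>" "rl_conv \<mu> f1" y] inner ..
  also have "\<dots> = (\<integral>r. (\<integral>s. H r s \<partial>lborel) \<partial>lborel)"
    by (rule lborel_pair.Fubini_integral)
       (unfold H_def, rule integrable_rl_kernel_double_convolution[OF _ b1 z1 \<mu>], simp)
  also have "\<dots> = Beta \<mu> (1 - \<mu>) * rl_conv 0 f1 y"
    by (simp add: kernel rl_conv_def)
  also have "rl_conv 0 f1 y = f y" by (rule rl_conv_0_deriv[OF d1 c1 z0 z1])
  finally show ?thesis .
qed

section \<open>Young's inequality in \<open>L2\<close>\<close>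

lemma L2sq_le_cmult:
  assumes [measurable]: "g \<in> borel_measurable borel" and C: "0 \<le> C"
    and le: "\<And>x. x \<in> {a<..<b} \<Longrightarrow> (f x)\<^sup>2 \<le> C * (g x)\<^sup>2"
  shows "L2sq a b f \<le> ennreal C * L2sq a b g"
proof -
  have "L2sq a b f \<le> (\<integral>\<^sup>+x. ennreal C * (indicator {a<..<b} x * ennreal ((g x)\<^sup>2)) \<partial>lborel)"
    unfolding L2sq_def
    by (intro nn_integral_mono) (auto simp: indicator_def C le ennreal_leI simp flip: ennreal_mult)
  also have "\<dots> = ennreal C * L2sq a b g"
    unfolding L2sq_def by (rule nn_integral_cmult) measurable
  finally show ?thesis .
qed

lemma abs_integral_le_nn_integral_abs:
  "ennreal \<bar>\<integral>s. X s \<partial>lborel\<bar> \<le> (\<integral>\<^sup>+s. ennreal \<bar>X s\<bar> \<partial>lborel)"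
proof (cases "integrable lborel X")
  case True
  then show ?thesis using integral_norm_bound_ennreal[OF True] by simp
next
  case False
  then show ?thesis by (simp add: not_integrable_integral_eq)
qed

lemma sq_rl_conv_le:
  assumes [measurable]: "g \<in> borel_measurable borel" and vanish: "\<And>x. x \<le> A \<Longrightarrow> g x = 0"
    and e: "0 \<le> e" "e < 1" and L: "0 \<le> L" and y: "y \<le> A + L"
  shows "ennreal ((rl_conv e g y)\<^sup>2)
           \<le> ennreal (L powr (1 - e) / (1 - e))
             * (\<integral>\<^sup>+s. ennreal (indicator {0<..L} s * rl_kernel e s * (g (y - s))\<^sup>2) \<partial>lborel)"
proof -
  define P where "P s = ennreal (sqrt (rl_kernel e s) * \<bar>g (y - s)\<bar>)" for s
  define Q where "Q s = ennreal (sqrt (rl_kernel e s) * indicator {0<..L} s)" for s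
  have [measurable]: "P \<in> borel_measurable lborel" "Q \<in> borel_measurable lborel"
    unfolding P_def Q_def by measurable
  have outside: "g (y - s) * rl_kernel e s = 0" if "\<not> (0 < s \<and> s \<le> L)" for s
    using that y vanish[of "y - s"] by (auto simp: rl_kernel_def)
  have PQ: "ennreal \<bar>g (y - s) * rl_kernel e s\<bar> = P s * Q s" for s
  proof (cases "0 < s \<and> s \<le> L")
    case True
    then have "\<bar>g (y - s) * rl_kernel e s\<bar>
        = (sqrt (rl_kernel e s) * \<bar>g (y - s)\<bar>) * (sqrt (rl_kernel e s) * indicator {0<..L} s)"
      by (simp add: abs_mult rl_kernel_nonneg mult_ac)
    then show ?thesis by (simp add: P_def Q_def ennreal_mult' rl_kernel_nonneg)
  next
    case False
    then show ?thesis using outside[OF False] by (auto simp: P_def Q_def rl_kernel_def)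
  qed
  have P2: "P s ^ 2 = ennreal (indicator {0<..L} s * rl_kernel e s * (g (y - s))\<^sup>2)" for s
  proof (cases "0 < s \<and> s \<le> L")
    case True
    then show ?thesis by (simp add: P_def ennreal_power power_mult_distrib rl_kernel_nonneg)
  next
    case False
    then show ?thesis using outside[OF False] by (auto simp: P_def rl_kernel_def)
  qed
  have Q2: "(\<integral>\<^sup>+s. Q s ^ 2 \<partial>lborel) = ennreal (L powr (1 - e) / (1 - e))"
    unfolding nn_integral_rl_kernel[OF e L, symmetric] Q_def
    by (intro nn_integral_cong) (simp add: ennreal_power power_mult_distrib rl_kernel_nonneg indicator_def)
  have "ennreal ((rl_conv e g y)\<^sup>2) = (ennreal \<bar>rl_conv e g y\<bar>)\<^sup>2"
    by (simp add: ennreal_power)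
  also have "\<dots> \<le> (\<integral>\<^sup>+s. P s * Q s \<partial>lborel)\<^sup>2"
    using abs_integral_le_nn_integral_abs[of "\<lambda>s. g (y - s) * rl_kernel e s"]
    by (intro power_mono) (simp_all add: rl_conv_def PQ)
  also have "\<dots> \<le> (\<integral>\<^sup>+s. P s ^ 2 \<partial>lborel) * (\<integral>\<^sup>+s. Q s ^ 2 \<partial>lborel)"
    by (rule Cauchy_Schwarz_nn_integral) measurable
  finally show ?thesis by (simp add: P2 Q2 mult.commute)
qed

lemma nn_integral_shift_le_L2sq:
  assumes [measurable]: "g \<in> borel_measurable borel"
    and vanish: "\<And>x. x \<le> A \<Longrightarrow> g x = 0" and "0 \<le> s"
  shows "(\<integral>\<^sup>+y. indicator {A<..<B} y * ennreal ((g (y - s))\<^sup>2) \<partial>lborel) \<le> L2sq A B g"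
proof -
  have "(\<integral>\<^sup>+y. indicator {A<..<B} y * ennreal ((g (y - s))\<^sup>2) \<partial>lborel)
      \<le> (\<integral>\<^sup>+y. ennreal (indicator {A<..<B} (y - s) * (g (y - s))\<^sup>2) \<partial>lborel)"
    using \<open>0 \<le> s\<close> vanish by (intro nn_integral_mono) (auto simp: indicator_def not_less)
  also have "\<dots> = L2sq A B g"
    unfolding L2sq_def
    by (subst nn_integral_lborel_shift) (measurable, intro nn_integral_cong, simp add: indicator_def)
  finally show ?thesis .
qed

text \<open>Young's inequality for the convolution with \<open>t^(-e)\<close>, which on \<open>(A, B)\<close> only sees the part of
  the kernel on \<open>(0, B - A]\<close>.\<close>
lemma L2sq_rl_conv_le:
  assumes [measurable]: "g \<in> borel_measurable borel" and vanish: "\<And>x. x \<le> A \<Longrightarrow> g x = 0"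
    and e: "0 \<le> e" "e < 1" and AB: "A \<le> B"
  shows "L2sq A B (rl_conv e g) \<le> ennreal (((B - A) powr (1 - e) / (1 - e))\<^sup>2) * L2sq A B g"
proof -
  define L where "L = B - A"
  define M where "M = L powr (1 - e) / (1 - e)"
  define k where "k s = indicator {0<..L} s * rl_kernel e s" for s
  have L: "0 \<le> L" using AB by (simp add: L_def)
  have M: "0 \<le> M" using e by (simp add: M_def)
  have k: "0 \<le> k s" for s by (simp add: k_def rl_kernel_nonneg)
  have [measurable]: "k \<in> borel_measurable borel" unfolding k_def by measurable
  have k_int: "(\<integral>\<^sup>+s. ennreal (k s) \<partial>lborel) = ennreal M"
    unfolding k_def M_def by (rule nn_integral_rl_kernel[OF e L])
  have pointwise: "indicator {A<..<B} y * ennreal ((rl_conv e g y)\<^sup>2)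
      \<le> ennreal M * (\<integral>\<^sup>+s. ennreal (k s) * (indicator {A<..<B} y * ennreal ((g (y - s))\<^sup>2)) \<partial>lborel)" for y
  proof (cases "y \<in> {A<..<B}")
    case True
    then have "ennreal ((rl_conv e g y)\<^sup>2)
        \<le> ennreal M * (\<integral>\<^sup>+s. ennreal (indicator {0<..L} s * rl_kernel e s * (g (y - s))\<^sup>2) \<partial>lborel)"
      unfolding M_def by (intro sq_rl_conv_le[OF _ vanish e L]) (auto simp: L_def)
    then show ?thesis
      using True by (simp add: k_def ennreal_mult' rl_kernel_nonneg)
  qed simp
  have "L2sq A B (rl_conv e g)
      \<le> (\<integral>\<^sup>+y. ennreal M * (\<integral>\<^sup>+s. ennreal (k s) * (indicator {A<..<B} y * ennreal ((g (y - s))\<^sup>2)) \<partial>lborel) \<partial>lborel)"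
    unfolding L2sq_def by (intro nn_integral_mono pointwise)
  also have "\<dots> = ennreal M * (\<integral>\<^sup>+y. \<integral>\<^sup>+s. ennreal (k s) * (indicator {A<..<B} y * ennreal ((g (y - s))\<^sup>2)) \<partial>lborel \<partial>lborel)"
    by (rule nn_integral_cmult) measurable
  also have "\<dots> = ennreal M * (\<integral>\<^sup>+s. \<integral>\<^sup>+y. ennreal (k s) * (indicator {A<..<B} y * ennreal ((g (y - s))\<^sup>2)) \<partial>lborel \<partial>lborel)"
    by (subst lborel_pair.Fubini') measurable
  also have "\<dots> = ennreal M * (\<integral>\<^sup>+s. ennreal (k s) * (\<integral>\<^sup>+y. indicator {A<..<B} y * ennreal ((g (y - s))\<^sup>2) \<partial>lborel) \<partial>lborel)"
    by (subst nn_integral_cmult) measurable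
  also have "\<dots> \<le> ennreal M * (\<integral>\<^sup>+s. ennreal (k s) * L2sq A B g \<partial>lborel)"
  proof (rule mult_left_mono, rule nn_integral_mono)
    fix s
    show "ennreal (k s) * (\<integral>\<^sup>+y. indicator {A<..<B} y * ennreal ((g (y - s))\<^sup>2) \<partial>lborel)
        \<le> ennreal (k s) * L2sq A B g"
      by (cases "0 < s") (auto simp: k_def rl_kernel_def intro!: mult_left_mono nn_integral_shift_le_L2sq[OF \<open>g \<in> borel_measurable borel\<close> vanish])
  qed simp
  also have "\<dots> = ennreal M * (ennreal M * L2sq A B g)"
    by (simp add: nn_integral_multc k_int)
  also have "\<dots> = ennreal (M\<^sup>2) * L2sq A B g"
    using M by (simp add: power2_eq_square ennreal_mult mult.assoc)
  finally show ?thesis by (simp add: M_def L_def)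
qed

section \<open>Smooth functions of compact support\<close>

lemma has_real_derivative_vanish_outside:
  assumes "\<And>x. (f has_real_derivative f' x) (at x)" and "\<And>x. x \<notin> {c..d} \<Longrightarrow> f x = 0"
    and "x \<notin> {c..d}"
  shows "f' x = 0"
proof -
  have "((\<lambda>_. 0) has_real_derivative f' x) (at x)"
    by (rule has_field_derivative_transform_within_open[OF assms(1), of "- {c..d}"])
       (use assms(2,3) in auto)
  then show ?thesis using DERIV_const DERIV_unique by blast
qed

lemma continuous_compact_support_bounded:
  fixes f :: "real \<Rightarrow> real"
  assumes "continuous_on UNIV f" and vanish: "\<And>x. x \<notin> {c..d} \<Longrightarrow> f x = 0"
  obtains M where "\<And>x. \<bar>f x\<bar> \<le> M"
proof -
  have "bounded (f ` {c..d})"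
    by (intro compact_imp_bounded compact_continuous_image continuous_on_subset[OF assms(1)]) auto
  then obtain B where "\<And>y. y \<in> f ` {c..d} \<Longrightarrow> norm y \<le> B" by (auto simp: bounded_iff)
  then have "\<bar>f x\<bar> \<le> max B 0" for x
    using vanish[of x] by (cases "x \<in> {c..d}") force+
  then show thesis by (rule that)
qed

lemma ord_n_eq_1: "0 \<le> \<mu> \<Longrightarrow> \<mu> < 1 \<Longrightarrow> ord_n \<mu> = 1"
  unfolding ord_n_def by (simp add: floor_eq_iff)

lemma ord_n_1: "ord_n 1 = 2"
  unfolding ord_n_def by simp

text \<open>With \<open>n = ord_n \<mu>\<close>, \<open>rl_der \<mu> f / \<Gamma>(n - \<mu>)\<close> is the Riemann--Liouville derivative of order \<open>\<mu>\<close>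
  of \<open>f\<close> based at \<open>-\<infinity>\<close>.\<close>
definition rl_der :: "real \<Rightarrow> (real \<Rightarrow> real) \<Rightarrow> real \<Rightarrow> real" where
  "rl_der \<mu> f = (deriv ^^ ord_n \<mu>) (rl_conv (\<mu> - real (ord_n \<mu>) + 1) f)"

text \<open>The square of Abel's factor \<open>1 / B(\<mu>, 1 - \<mu>)\<close> (absent for \<open>\<mu> = 1\<close>) times the square of the
  \<open>L1(0, L)\<close> norm of \<open>t^(\<mu> - 1)\<close>.\<close>
definition inversion_const :: "real \<Rightarrow> real \<Rightarrow> real" where
  "inversion_const \<mu> L = (if \<mu> < 1 then (1 / Beta \<mu> (1 - \<mu>))\<^sup>2 else 1) * (L powr \<mu> / \<mu>)\<^sup>2"

lemma Beta_complement_pos: "0 < \<mu> \<Longrightarrow> \<mu> < 1 \<Longrightarrow> 0 < Beta \<mu> (1 - \<mu> :: real)"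
  using Gamma_real_pos[of \<mu>] Gamma_real_pos[of "1 - \<mu>"] by (simp add: Beta_def)

lemma inversion_const_pos: "0 < \<mu> \<Longrightarrow> \<mu> \<le> 1 \<Longrightarrow> 0 < L \<Longrightarrow> 0 < inversion_const \<mu> L"
  using Beta_complement_pos[of \<mu>] by (auto simp: inversion_const_def intro!: mult_pos_pos)

locale supported_C3 =
  fixes f0 f1 f2 f3 :: "real \<Rightarrow> real" and c d :: real
  assumes has_deriv_f0: "\<And>x. (f0 has_real_derivative f1 x) (at x)"
    and has_deriv_f1: "\<And>x. (f1 has_real_derivative f2 x) (at x)"
    and has_deriv_f2: "\<And>x. (f2 has_real_derivative f3 x) (at x)"
    and continuous_f3: "continuous_on UNIV f3"
    and support: "\<And>x. x \<notin> {c..d} \<Longrightarrow> f0 x = 0"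
begin

lemma continuous: "continuous_on UNIV f0" "continuous_on UNIV f1" "continuous_on UNIV f2"
  using continuous_on_UNIV_if_DERIV[OF has_deriv_f0] continuous_on_UNIV_if_DERIV[OF has_deriv_f1]
    continuous_on_UNIV_if_DERIV[OF has_deriv_f2] by auto

lemma vanish:
  assumes "x \<notin> {c..d}"
  shows "f1 x = 0" "f2 x = 0" "f3 x = 0"
proof -
  have z1: "f1 x = 0" if "x \<notin> {c..d}" for x
    by (rule has_real_derivative_vanish_outside[OF has_deriv_f0 support that])
  have z2: "f2 x = 0" if "x \<notin> {c..d}" for x
    by (rule has_real_derivative_vanish_outside[OF has_deriv_f1 z1 that])
  have z3: "f3 x = 0" if "x \<notin> {c..d}" for x
    by (rule has_real_derivative_vanish_outside[OF has_deriv_f2 z2 that])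
  show "f1 x = 0" "f2 x = 0" "f3 x = 0" using z1 z2 z3 assms by auto
qed

lemma vanish_left:
  assumes "x < c"
  shows "f0 x = 0" "f1 x = 0" "f2 x = 0"
  using assms support vanish by auto

lemma bounds:
  obtains M0 M1 M2 M3 where "\<And>x. \<bar>f0 x\<bar> \<le> M0" "\<And>x. \<bar>f1 x\<bar> \<le> M1" "\<And>x. \<bar>f2 x\<bar> \<le> M2" "\<And>x. \<bar>f3 x\<bar> \<le> M3"
proof -
  obtain M0 where "\<And>x. \<bar>f0 x\<bar> \<le> M0"
    using continuous_compact_support_bounded[OF continuous(1) support] by blast
  moreover obtain M1 where "\<And>x. \<bar>f1 x\<bar> \<le> M1"
    using continuous_compact_support_bounded[OF continuous(2) vanish(1)] by blast
  moreover obtain M2 where "\<And>x. \<bar>f2 x\<bar> \<le> M2"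
    using continuous_compact_support_bounded[OF continuous(3) vanish(2)] by blast
  moreover obtain M3 where "\<And>x. \<bar>f3 x\<bar> \<le> M3"
    using continuous_compact_support_bounded[OF continuous_f3 vanish(3)] by blast
  ultimately show thesis by (rule that)
qed

lemma has_real_derivative_rl_conv_f0:
  assumes "0 \<le> e" "e < 1"
  shows "(rl_conv e f0 has_real_derivative rl_conv e f1 y) (at y)"
proof -
  obtain M0 M1 M2 M3 where b: "\<And>x. \<bar>f0 x\<bar> \<le> M0" "\<And>x. \<bar>f1 x\<bar> \<le> M1" "\<And>x. \<bar>f2 x\<bar> \<le> M2" "\<And>x. \<bar>f3 x\<bar> \<le> M3"
    using bounds by blast
  show ?thesis
    by (rule has_real_derivative_rl_conv[OF has_deriv_f0 has_deriv_f1 b(1-3) vanish_left(1,2) assms])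
qed

lemma has_real_derivative_rl_conv_f1:
  assumes "0 \<le> e" "e < 1"
  shows "(rl_conv e f1 has_real_derivative rl_conv e f2 y) (at y)"
proof -
  obtain M0 M1 M2 M3 where b: "\<And>x. \<bar>f0 x\<bar> \<le> M0" "\<And>x. \<bar>f1 x\<bar> \<le> M1" "\<And>x. \<bar>f2 x\<bar> \<le> M2" "\<And>x. \<bar>f3 x\<bar> \<le> M3"
    using bounds by blast
  show ?thesis
    by (rule has_real_derivative_rl_conv[OF has_deriv_f1 has_deriv_f2 b(2-4) vanish_left(2,3) assms])
qed

lemma rl_conv_0_f1: "rl_conv 0 f1 = f0"
  using rl_conv_0_deriv[OF has_deriv_f0 continuous(2) vanish_left(1,2)] by blast

lemma deriv_rl_conv_0: "deriv (rl_conv 0 f0) = f0"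
  using DERIV_imp_deriv[OF has_real_derivative_rl_conv_f0] rl_conv_0_f1 by auto

lemma rl_der_less_1: "0 \<le> \<mu> \<Longrightarrow> \<mu> < 1 \<Longrightarrow> rl_der \<mu> f0 = rl_conv \<mu> f1"
  using DERIV_imp_deriv[OF has_real_derivative_rl_conv_f0]
  by (auto simp: rl_der_def ord_n_eq_1)

lemma rl_der_1: "rl_der 1 f0 = f1"
  using DERIV_imp_deriv[OF has_deriv_f0]
  by (auto simp: rl_der_def ord_n_1 numeral_2_eq_2 deriv_rl_conv_0)

lemma differentiable_higher_deriv_rl_conv:
  assumes "0 < \<mu>" "\<mu> \<le> 1" "k < ord_n \<mu>"
  shows "(deriv ^^ k) (rl_conv (\<mu> - real (ord_n \<mu>) + 1) f0) differentiable (at x)"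
proof (cases "\<mu> < 1")
  case True
  then show ?thesis
    using assms has_real_derivative_rl_conv_f0[of \<mu> x] by (auto simp: ord_n_eq_1 real_differentiable_def)
next
  case False
  then have "\<mu> = 1" using assms by simp
  then show ?thesis
    using assms has_real_derivative_rl_conv_f0[of 0 x] has_deriv_f0[of x]
    by (auto simp: ord_n_1 less_2_cases_iff deriv_rl_conv_0 real_differentiable_def)
qed

lemma continuous_on_rl_der:
  assumes "0 < \<mu>" "\<mu> \<le> 1"
  shows "continuous_on UNIV (rl_der \<mu> f0)"
proof (cases "\<mu> < 1")
  case True
  have "(rl_conv \<mu> f1 has_real_derivative rl_conv \<mu> f2 y) (at y)" for y
    using True assms by (intro has_real_derivative_rl_conv_f1) simp_all
  then have "continuous_on UNIV (rl_conv \<mu> f1)" by (rule continuous_on_UNIV_if_DERIV)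
  with True assms show ?thesis by (simp add: rl_der_less_1)
next
  case False
  then show ?thesis using assms continuous(2) by (simp add: rl_der_1)
qed

lemma L2sq_le_rl_der:
  assumes \<mu>: "0 < \<mu>" "\<mu> \<le> 1" and "A < c" "A < B"
  shows "L2sq A B f0 \<le> ennreal (inversion_const \<mu> (B - A)) * L2sq A B (rl_der \<mu> f0)"
proof -
  let ?Young = "((B - A) powr \<mu> / \<mu>)\<^sup>2"
  have [measurable]: "f0 \<in> borel_measurable borel"
    using continuous(1) by (rule borel_measurable_continuous_onI)
  have [measurable]: "rl_der \<mu> f0 \<in> borel_measurable borel"
    using continuous_on_rl_der[OF \<mu>] by (rule borel_measurable_continuous_onI)
  have g_vanish: "rl_der \<mu> f0 x = 0" if "\<mu> < 1 \<Longrightarrow> 0 < \<mu>" "x \<le> A" for x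
  proof (cases "\<mu> < 1")
    case True
    have "(\<lambda>t. f1 (x - t) * rl_kernel \<mu> t) = (\<lambda>t. 0)"
      using that(2) \<open>A < c\<close> vanish_left(2) by (auto simp: rl_kernel_def)
    then show ?thesis using True \<mu> by (simp add: rl_der_less_1 rl_conv_def)
  next
    case False
    then show ?thesis using that(2) \<mu> \<open>A < c\<close> vanish_left(2) by (simp add: rl_der_1)
  qed
  have Young: "L2sq A B (rl_conv (1 - \<mu>) (rl_der \<mu> f0)) \<le> ennreal ?Young * L2sq A B (rl_der \<mu> f0)"
    using L2sq_rl_conv_le[of "rl_der \<mu> f0" A "1 - \<mu>" B] g_vanish \<mu> \<open>A < B\<close> by simp
  show ?thesis
  proof (cases "\<mu> < 1")
    case True
    define \<beta> where "\<beta> = Beta \<mu> (1 - \<mu>)"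
    have \<beta>: "0 < \<beta>" using Beta_complement_pos \<mu> True by (simp add: \<beta>_def)
    obtain M0 M1 M2 M3 where b: "\<And>x. \<bar>f0 x\<bar> \<le> M0" "\<And>x. \<bar>f1 x\<bar> \<le> M1" "\<And>x. \<bar>f2 x\<bar> \<le> M2" "\<And>x. \<bar>f3 x\<bar> \<le> M3"
      using bounds by blast
    have Abel: "rl_conv (1 - \<mu>) (rl_der \<mu> f0) = (\<lambda>y. \<beta> * f0 y)"
      using rl_conv_Abel_inversion[OF has_deriv_f0 continuous(2) b(2) vanish_left(1,2) \<mu>(1) True] \<mu> True
      by (simp add: fun_eq_iff \<beta>_def rl_der_less_1)
    have "L2sq A B f0 \<le> ennreal ((1 / \<beta>)\<^sup>2) * L2sq A B (rl_conv (1 - \<mu>) (rl_der \<mu> f0))"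
      using \<beta> by (intro L2sq_le_cmult) (simp_all add: Abel field_simps power_mult_distrib)
    also have "\<dots> \<le> ennreal ((1 / \<beta>)\<^sup>2) * (ennreal ?Young * L2sq A B (rl_der \<mu> f0))"
      by (intro mult_left_mono Young) simp
    finally show ?thesis
      using True by (simp add: inversion_const_def \<beta>_def ennreal_mult mult.assoc)
  next
    case False
    then have "\<mu> = 1" using \<mu> by simp
    then show ?thesis
      using Young by (simp add: inversion_const_def rl_der_1 rl_conv_0_f1)
  qed
qed

end

section \<open>Test functions and the tempered derivatives\<close>

lemma test_fun_has_real_derivative:
  assumes "\<phi> \<in> test_fun a b"
  shows "((deriv ^^ k) \<phi> has_real_derivative (deriv ^^ Suc k) \<phi> x) (at x)"
proof -
  have "(deriv ^^ k) \<phi> differentiable (at x)" using assms by (simp add: test_fun_def)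
  then show ?thesis using DERIV_deriv_iff_real_differentiable by force
qed

lemma continuous_on_test_fun:
  assumes "\<phi> \<in> test_fun a b"
  shows "continuous_on UNIV \<phi>"
proof -
  have "(\<phi> has_real_derivative deriv \<phi> x) (at x)" for x
    using test_fun_has_real_derivative[OF assms, of 0] by simp
  then show ?thesis by (rule continuous_on_UNIV_if_DERIV)
qed

lemma test_fun_support:
  assumes "\<phi> \<in> test_fun a b"
  obtains c d where "a < c" "d < b" "\<And>x. x \<notin> {c..d} \<Longrightarrow> \<phi> x = 0"
  using assms unfolding test_fun_def by blast

lemma supported_C3_exp_mult_test_fun:
  assumes "\<phi> \<in> test_fun a b" and "\<And>x. x \<notin> {c..d} \<Longrightarrow> \<phi> x = 0"
  shows "\<exists>f1 f2 f3. supported_C3 (\<lambda>x. exp (l * x) * \<phi> x) f1 f2 f3 c d"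
proof -
  define p1 where "p1 = (deriv ^^ Suc 0) \<phi>"
  define p2 where "p2 = (deriv ^^ Suc (Suc 0)) \<phi>"
  define p3 where "p3 = (deriv ^^ Suc (Suc (Suc 0))) \<phi>"
  define p4 where "p4 = (deriv ^^ Suc (Suc (Suc (Suc 0)))) \<phi>"
  note d = test_fun_has_real_derivative[OF assms(1)]
  have d0: "(\<phi> has_real_derivative p1 x) (at x)" for x using d[of 0] by (simp add: p1_def)
  have d1: "(p1 has_real_derivative p2 x) (at x)" for x using d[of "Suc 0"] by (simp only: p1_def p2_def)
  have d2: "(p2 has_real_derivative p3 x) (at x)" for x using d[of "Suc (Suc 0)"] by (simp only: p2_def p3_def)
  have d3: "(p3 has_real_derivative p4 x) (at x)" for x
    using d[of "Suc (Suc (Suc 0))"] by (simp only: p3_def p4_def)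
  note [derivative_intros] = d0 d1 d2 d3
  have "supported_C3 (\<lambda>x. exp (l * x) * \<phi> x)
      (\<lambda>x. exp (l * x) * (l * \<phi> x + p1 x))
      (\<lambda>x. exp (l * x) * (l\<^sup>2 * \<phi> x + 2 * l * p1 x + p2 x))
      (\<lambda>x. exp (l * x) * (l ^ 3 * \<phi> x + 3 * l\<^sup>2 * p1 x + 3 * l * p2 x + p3 x)) c d"
  proof
    show "((\<lambda>x. exp (l * x) * \<phi> x) has_real_derivative exp (l * x) * (l * \<phi> x + p1 x)) (at x)" for x
      by (auto intro!: derivative_eq_intros simp: algebra_simps)
    show "((\<lambda>x. exp (l * x) * (l * \<phi> x + p1 x)) has_real_derivative
        exp (l * x) * (l\<^sup>2 * \<phi> x + 2 * l * p1 x + p2 x)) (at x)" for x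
      by (auto intro!: derivative_eq_intros simp: algebra_simps power2_eq_square)
    show "((\<lambda>x. exp (l * x) * (l\<^sup>2 * \<phi> x + 2 * l * p1 x + p2 x)) has_real_derivative
        exp (l * x) * (l ^ 3 * \<phi> x + 3 * l\<^sup>2 * p1 x + 3 * l * p2 x + p3 x)) (at x)" for x
      by (auto intro!: derivative_eq_intros simp: algebra_simps power2_eq_square power3_eq_cube)
    have "continuous_on UNIV \<phi>" "continuous_on UNIV (p1)" "continuous_on UNIV (p2)"
      "continuous_on UNIV (p3)"
      using continuous_on_UNIV_if_DERIV[OF d0] continuous_on_UNIV_if_DERIV[OF d1]
        continuous_on_UNIV_if_DERIV[OF d2] continuous_on_UNIV_if_DERIV[OF d3] by auto
    then show "continuous_on UNIV (\<lambda>x. exp (l * x) * (l ^ 3 * \<phi> x + 3 * l\<^sup>2 * p1 x + 3 * l * p2 x + p3 x))"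
      by (intro continuous_intros) auto
    show "x \<notin> {c..d} \<Longrightarrow> exp (l * x) * \<phi> x = 0" for x using assms(2) by simp
  qed
  then show ?thesis by blast
qed

lemma interval_integral_eq_rl_conv:
  fixes a c e y :: real
  assumes vanish: "\<And>x. x < c \<Longrightarrow> h x = 0" and "a < c"
  shows "(LBINT \<xi>=a..y. h \<xi> / (y - \<xi>) powr e) = rl_conv e h y"
proof (cases "a \<le> y")
  case True
  have "(LBINT \<xi>=a..y. h \<xi> / (y - \<xi>) powr e)
      = (\<integral>\<xi>. indicator {a<..<y} \<xi> *\<^sub>R (h \<xi> / (y - \<xi>) powr e) \<partial>lborel)"
    using True by (simp add: interval_lebesgue_integral_def set_lebesgue_integral_def)
  also have "\<dots> = \<bar>-1\<bar> *\<^sub>R (\<integral>t. indicator {a<..<y} (y + (-1) * t) *\<^sub>R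
                                 (h (y + (-1) * t) / (y - (y + (-1) * t)) powr e) \<partial>lborel)"
    by (rule lborel_integral_real_affine) simp
  also have "\<dots> = (\<integral>t. h (y - t) * rl_kernel e t \<partial>lborel)"
  proof -
    have "indicator {a<..<y} (y + (-1) * t) *\<^sub>R (h (y + (-1) * t) / (y - (y + (-1) * t)) powr e)
        = h (y - t) * rl_kernel e t" for t
      using vanish[of "y - t"] \<open>a < c\<close>
      by (cases "0 < t"; cases "a < y - t") (auto simp: rl_kernel_def indicator_def powr_minus_divide)
    then show ?thesis by simp
  qed
  finally show ?thesis by (simp add: rl_conv_def)
next
  case False
  have "(\<lambda>\<xi>. indicator {y<..<a} \<xi> *\<^sub>R (h \<xi> / (y - \<xi>) powr e)) = (\<lambda>\<xi>. 0)"
    using vanish \<open>a < c\<close> by (auto simp: indicator_def fun_eq_iff)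
  moreover have "(\<lambda>t. h (y - t) * rl_kernel e t) = (\<lambda>t. 0)"
    using vanish \<open>a < c\<close> False by (auto simp: rl_kernel_def fun_eq_iff)
  ultimately show ?thesis using False
    by (simp add: interval_lebesgue_integral_def set_lebesgue_integral_def rl_conv_def)
qed

lemma DL_integral_eq_rl_conv:
  assumes "\<phi> \<in> test_fun a b"
  shows "(\<lambda>y. LBINT \<xi>=a..y. exp (lam * \<xi>) * \<phi> \<xi> / (y - \<xi>) powr e) = rl_conv e (\<lambda>\<xi>. exp (lam * \<xi>) * \<phi> \<xi>)"
proof
  fix y
  obtain c d where "a < c" "\<And>x. x \<notin> {c..d} \<Longrightarrow> \<phi> x = 0"
    using test_fun_support[OF assms] by blast
  then show "(LBINT \<xi>=a..y. exp (lam * \<xi>) * \<phi> \<xi> / (y - \<xi>) powr e) = rl_conv e (\<lambda>\<xi>. exp (lam * \<xi>) * \<phi> \<xi>) y"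
    by (intro interval_integral_eq_rl_conv[where c = c]) auto
qed

lemma DL_test_fun_eq:
  assumes "\<phi> \<in> test_fun a b"
  shows "DL a \<mu> lam \<phi>
    = (\<lambda>x. exp (- lam * x) / Gamma (real (ord_n \<mu>) - \<mu>) * rl_der \<mu> (\<lambda>\<xi>. exp (lam * \<xi>) * \<phi> \<xi>) x)"
  unfolding DL_def DL_integral_eq_rl_conv[OF assms] rl_der_def ..

lemma Gamma_ord_n_pos: "0 < \<mu> \<Longrightarrow> \<mu> \<le> 1 \<Longrightarrow> 0 < Gamma (real (ord_n \<mu>) - \<mu>)"
  by (cases "\<mu> < 1") (auto simp: ord_n_eq_1 ord_n_1)

lemma continuous_on_DL_test_fun:
  assumes "\<phi> \<in> test_fun a b" "0 < \<mu>" "\<mu> \<le> 1"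
  shows "continuous_on UNIV (DL a \<mu> lam \<phi>)"
proof -
  obtain c d where "\<And>x. x \<notin> {c..d} \<Longrightarrow> \<phi> x = 0"
    using test_fun_support[OF assms(1)] by blast
  then obtain f1 f2 f3 where "supported_C3 (\<lambda>x. exp (lam * x) * \<phi> x) f1 f2 f3 c d"
    using supported_C3_exp_mult_test_fun[OF assms(1)] by blast
  then interpret supported_C3 "\<lambda>x. exp (lam * x) * \<phi> x" f1 f2 f3 c d .
  show ?thesis
    unfolding DL_test_fun_eq[OF assms(1)]
    using continuous_on_rl_der[OF assms(2,3)] Gamma_ord_n_pos[OF assms(2,3)]
    by (intro continuous_intros) auto
qed

lemma L2sq_exp_mult_le:
  assumes [measurable]: "f \<in> borel_measurable borel" and le: "\<And>x. x \<in> {a<..<b} \<Longrightarrow> c * x \<le> m"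
  shows "L2sq a b (\<lambda>x. k * exp (c * x) * f x) \<le> ennreal (k\<^sup>2 * exp (2 * m)) * L2sq a b f"
proof (rule L2sq_le_cmult)
  fix x assume "x \<in> {a<..<b}"
  then have "exp (c * x) * exp (c * x) \<le> exp (2 * m)"
    using le by (simp flip: exp_add)
  then have "(k\<^sup>2 * (f x)\<^sup>2) * (exp (c * x) * exp (c * x)) \<le> (k\<^sup>2 * (f x)\<^sup>2) * exp (2 * m)"
    by (rule mult_left_mono) simp
  then show "(k * exp (c * x) * f x)\<^sup>2 \<le> k\<^sup>2 * exp (2 * m) * (f x)\<^sup>2"
    by (simp add: power2_eq_square mult_ac)
qed simp_all

lemma L2sq_le_DL_test_fun:
  assumes "a < b" "0 \<le> lam" and \<mu>: "0 < \<mu>" "\<mu> \<le> 1" and \<phi>: "\<phi> \<in> test_fun a b"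
  shows "L2sq a b \<phi> \<le> ennreal (exp (2 * lam * (b - a)) * (Gamma (real (ord_n \<mu>) - \<mu>))\<^sup>2
                               * inversion_const \<mu> (b - a)) * L2sq a b (DL a \<mu> lam \<phi>)"
proof -
  define h where "h = (\<lambda>x. exp (lam * x) * \<phi> x)"
  define \<Gamma> where "\<Gamma> = Gamma (real (ord_n \<mu>) - \<mu>)"
  define K where "K = inversion_const \<mu> (b - a)"
  have \<Gamma>: "0 < \<Gamma>" using Gamma_ord_n_pos[OF \<mu>] by (simp add: \<Gamma>_def)
  have K: "0 \<le> K" using inversion_const_pos[OF \<mu>] \<open>a < b\<close> by (simp add: K_def less_imp_le)
  obtain c d where "a < c" and support: "\<And>x. x \<notin> {c..d} \<Longrightarrow> \<phi> x = 0"
    using test_fun_support[OF \<phi>] by blast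
  then obtain f1 f2 f3 where "supported_C3 h f1 f2 f3 c d"
    using supported_C3_exp_mult_test_fun[OF \<phi>] unfolding h_def by blast
  then interpret supported_C3 h f1 f2 f3 c d .
  have [measurable]: "h \<in> borel_measurable borel" "DL a \<mu> lam \<phi> \<in> borel_measurable borel"
    using continuous(1) continuous_on_DL_test_fun[OF \<phi> \<mu>]
    by (auto intro: borel_measurable_continuous_onI)
  have \<phi>_eq: "\<phi> = (\<lambda>x. 1 * exp (- lam * x) * h x)"
    by (simp add: h_def fun_eq_iff mult.assoc[symmetric] flip: exp_add)
  have der_eq: "rl_der \<mu> h = (\<lambda>x. \<Gamma> * exp (lam * x) * DL a \<mu> lam \<phi> x)"
    using \<Gamma> by (simp add: DL_test_fun_eq[OF \<phi>] h_def \<Gamma>_def fun_eq_iff exp_minus field_simps)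
  have "L2sq a b \<phi> \<le> ennreal (1\<^sup>2 * exp (2 * (- lam * a))) * L2sq a b h"
    unfolding \<phi>_eq by (rule L2sq_exp_mult_le) (use \<open>0 \<le> lam\<close> in \<open>auto intro: mult_left_mono\<close>)
  also have "\<dots> \<le> ennreal (1\<^sup>2 * exp (2 * (- lam * a))) * (ennreal K * L2sq a b (rl_der \<mu> h))"
    using L2sq_le_rl_der[OF \<mu> \<open>a < c\<close> \<open>a < b\<close>] by (intro mult_left_mono) (simp_all add: K_def)
  also have "L2sq a b (rl_der \<mu> h) \<le> ennreal (\<Gamma>\<^sup>2 * exp (2 * (lam * b))) * L2sq a b (DL a \<mu> lam \<phi>)"
    unfolding der_eq by (rule L2sq_exp_mult_le) (use \<open>0 \<le> lam\<close> in \<open>auto intro: mult_left_mono\<close>)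
  finally have "L2sq a b \<phi> \<le> ennreal (exp (2 * (- lam * a)))
      * (ennreal K * (ennreal (\<Gamma>\<^sup>2 * exp (2 * (lam * b))) * L2sq a b (DL a \<mu> lam \<phi>)))"
    by (simp add: mult_left_mono)
  also have "\<dots> = ennreal (exp (2 * (- lam * a)) * exp (2 * (lam * b)) * \<Gamma>\<^sup>2 * K) * L2sq a b (DL a \<mu> lam \<phi>)"
    using K by (simp add: ennreal_mult mult_ac)
  also have "exp (2 * (- lam * a)) * exp (2 * (lam * b)) = exp (2 * lam * (b - a))"
    by (simp add: algebra_simps flip: exp_add)
  finally show ?thesis by (simp add: \<Gamma>_def K_def)
qed

lemma higher_deriv_reflect:
  fixes F :: "real \<Rightarrow> real"
  assumes "\<And>k x. k < n \<Longrightarrow> (deriv ^^ k) F differentiable (at x)"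
  shows "(deriv ^^ n) (\<lambda>y. F (- y)) = (\<lambda>x. (-1) ^ n * (deriv ^^ n) F (- x))"
  using assms
proof (induction n)
  case 0
  show ?case by simp
next
  case (Suc n)
  have IH: "(deriv ^^ n) (\<lambda>y. F (- y)) = (\<lambda>x. (-1) ^ n * (deriv ^^ n) F (- x))"
    using Suc by simp
  have "((\<lambda>x. (-1) ^ n * (deriv ^^ n) F (- x)) has_real_derivative
          (-1) ^ Suc n * (deriv ^^ Suc n) F (- x)) (at x)" for x
  proof -
    have "((deriv ^^ n) F has_real_derivative (deriv ^^ Suc n) F (- x)) (at (- x))"
      using Suc.prems[of n "- x"] by (simp add: DERIV_deriv_iff_real_differentiable)
    then show ?thesis using DERIV_mirror DERIV_cmult by fastforce
  qed
  show ?case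
  proof
    fix x
    have "(deriv ^^ Suc n) (\<lambda>y. F (- y)) x = deriv (\<lambda>x. (-1) ^ n * (deriv ^^ n) F (- x)) x"
      by (simp add: IH)
    also have "\<dots> = (-1) ^ Suc n * (deriv ^^ Suc n) F (- x)"
      by (rule DERIV_imp_deriv) fact
    finally show "(deriv ^^ Suc n) (\<lambda>y. F (- y)) x = (-1) ^ Suc n * (deriv ^^ Suc n) F (- x)" .
  qed
qed

lemma test_fun_reflect:
  assumes "\<phi> \<in> test_fun a b"
  shows "(\<lambda>x. \<phi> (- x)) \<in> test_fun (- b) (- a)"
proof -
  have diff: "(deriv ^^ k) \<phi> differentiable (at x)" for k x
    using assms by (simp add: test_fun_def)
  have "(deriv ^^ k) (\<lambda>x. \<phi> (- x)) differentiable (at x)" for k x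
  proof -
    obtain D where "((deriv ^^ k) \<phi> has_real_derivative D) (at (- x))"
      using diff[of k "- x"] by (auto simp: real_differentiable_def)
    then have "((\<lambda>x. (-1) ^ k * (deriv ^^ k) \<phi> (- x)) has_real_derivative (-1) ^ k * - D) (at x)"
      using DERIV_mirror DERIV_cmult by blast
    then show ?thesis
      by (auto simp: higher_deriv_reflect[OF diff] real_differentiable_def)
  qed
  moreover obtain c d where "a < c" "d < b" and support: "\<And>x. x \<notin> {c..d} \<Longrightarrow> \<phi> x = 0"
    using test_fun_support[OF assms] by blast
  then have "\<exists>c d. - b < c \<and> d < - a \<and> (\<forall>x. x \<notin> {c..d} \<longrightarrow> \<phi> (- x) = 0)"
    by (intro exI[of _ "- d"] exI[of _ "- c"]) (auto intro!: support)
  ultimately show ?thesis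
    unfolding test_fun_def by blast
qed

lemma DR_eq_DL_reflect:
  assumes \<phi>: "\<phi> \<in> test_fun a b" and \<mu>: "0 < \<mu>" "\<mu> \<le> 1"
  shows "DR b \<mu> lam \<phi> x = DL (- b) \<mu> lam (\<lambda>y. \<phi> (- y)) (- x)"
proof -
  let ?n = "ord_n \<mu>" and ?e = "\<mu> - real (ord_n \<mu>) + 1"
  define \<psi> where "\<psi> y = \<phi> (- y)" for y
  define F where "F = (\<lambda>y. LBINT \<xi>=- b..y. exp (lam * \<xi>) * \<psi> \<xi> / (y - \<xi>) powr ?e)"
  have \<psi>: "\<psi> \<in> test_fun (- b) (- a)"
    using test_fun_reflect[OF \<phi>] by (simp add: \<psi>_def[abs_def])
  have reflect: "(\<lambda>y. LBINT \<xi>=y..b. exp (- lam * \<xi>) * \<phi> \<xi> / (\<xi> - y) powr ?e) = (\<lambda>y. F (- y))"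
    by (rule ext, subst interval_integral_reflect) (simp add: F_def \<psi>_def minus_diff_commute)
  have diff: "(deriv ^^ k) F differentiable (at y)" if "k < ?n" for k y
  proof -
    obtain c d where "\<And>x. x \<notin> {c..d} \<Longrightarrow> \<psi> x = 0" using test_fun_support[OF \<psi>] by blast
    then obtain f1 f2 f3 where "supported_C3 (\<lambda>x. exp (lam * x) * \<psi> x) f1 f2 f3 c d"
      using supported_C3_exp_mult_test_fun[OF \<psi>] by blast
    then show ?thesis
      using supported_C3.differentiable_higher_deriv_rl_conv[OF _ \<mu> that]
      by (simp add: F_def DL_integral_eq_rl_conv[OF \<psi>])
  qed
  have "(deriv ^^ ?n) (\<lambda>y. F (- y)) = (\<lambda>x. (-1) ^ ?n * (deriv ^^ ?n) F (- x))"
    by (rule higher_deriv_reflect) (rule diff)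
  then have "DR b \<mu> lam \<phi> x = ((-1) ^ ?n * (-1) ^ ?n) * exp (lam * x) / Gamma (real ?n - \<mu>)
                            * (deriv ^^ ?n) F (- x)"
    unfolding DR_def reflect by simp
  also have "\<dots> = DL (- b) \<mu> lam \<psi> (- x)"
    by (simp add: DL_def F_def flip: power_mult_distrib)
  finally show ?thesis by (simp add: \<psi>_def[abs_def])
qed

lemma L2sq_reflect:
  assumes [measurable]: "f \<in> borel_measurable borel"
  shows "L2sq (- b) (- a) (\<lambda>x. f (- x)) = L2sq a b f"
proof -
  have "L2sq a b f = (\<integral>\<^sup>+x. indicator {a<..<b} (- x) * ennreal ((f (- x))\<^sup>2) \<partial>lborel)"
    unfolding L2sq_def
    using nn_integral_real_affine[of "\<lambda>x. indicator {a<..<b} x * ennreal ((f x)\<^sup>2)" "-1" 0] by simp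
  also have "\<dots> = L2sq (- b) (- a) (\<lambda>x. f (- x))"
    unfolding L2sq_def by (intro nn_integral_cong) (auto simp: indicator_def)
  finally show ?thesis ..
qed

lemma continuous_on_DR_test_fun:
  assumes "\<phi> \<in> test_fun a b" "0 < \<mu>" "\<mu> \<le> 1"
  shows "continuous_on UNIV (DR b \<mu> lam \<phi>)"
proof -
  have "continuous_on UNIV (DL (- b) \<mu> lam (\<lambda>y. \<phi> (- y)))"
    by (rule continuous_on_DL_test_fun[OF test_fun_reflect[OF assms(1)] assms(2,3)])
  then have "continuous_on UNIV (\<lambda>x. DL (- b) \<mu> lam (\<lambda>y. \<phi> (- y)) (- x))"
    by (rule continuous_on_compose2) (auto intro: continuous_intros)
  then show ?thesis by (simp add: DR_eq_DL_reflect[OF assms] fun_eq_iff)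
qed

lemma L2sq_le_DR_test_fun:
  assumes "a < b" "0 \<le> lam" and \<mu>: "0 < \<mu>" "\<mu> \<le> 1" and \<phi>: "\<phi> \<in> test_fun a b"
  shows "L2sq a b \<phi> \<le> ennreal (exp (2 * lam * (b - a)) * (Gamma (real (ord_n \<mu>) - \<mu>))\<^sup>2
                               * inversion_const \<mu> (b - a)) * L2sq a b (DR b \<mu> lam \<phi>)"
proof -
  have [measurable]: "\<phi> \<in> borel_measurable borel" "DR b \<mu> lam \<phi> \<in> borel_measurable borel"
    using continuous_on_test_fun[OF \<phi>] continuous_on_DR_test_fun[OF \<phi> \<mu>]
    by (auto intro: borel_measurable_continuous_onI)
  have "DL (- b) \<mu> lam (\<lambda>y. \<phi> (- y)) = (\<lambda>x. DR b \<mu> lam \<phi> (- x))"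
    by (simp add: DR_eq_DL_reflect[OF \<phi> \<mu>] fun_eq_iff)
  then show ?thesis
    using L2sq_le_DL_test_fun[of "- b" "- a" lam \<mu> "\<lambda>y. \<phi> (- y)"] assms test_fun_reflect[OF \<phi>]
    by (simp add: L2sq_reflect)
qed

section \<open>Extension to \<open>H_0^\<mu>\<close>\<close>

lemma L2sq_le_diff_add:
  assumes [measurable]: "(\<lambda>x. indicator {a<..<b} x * f x) \<in> borel_measurable lborel"
    "(\<lambda>x. indicator {a<..<b} x * g x) \<in> borel_measurable lborel"
  shows "L2sq a b f \<le> 2 * L2sq a b (\<lambda>x. g x - f x) + 2 * L2sq a b g"
proof -
  define F where "F x = indicator {a<..<b} x * f x" for x
  define G where "G x = indicator {a<..<b} x * g x" for x
  have [measurable]: "F \<in> borel_measurable lborel" "G \<in> borel_measurable lborel"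
    unfolding F_def G_def by simp_all
  have L2sq_eq: "L2sq a b h = (\<integral>\<^sup>+x. ennreal ((indicator {a<..<b} x * h x)\<^sup>2) \<partial>lborel)" for h
    unfolding L2sq_def by (intro nn_integral_cong) (simp add: indicator_def)
  have "L2sq a b f \<le> (\<integral>\<^sup>+x. ennreal (2 * (G x - F x)\<^sup>2) + ennreal (2 * (G x)\<^sup>2) \<partial>lborel)"
    unfolding L2sq_eq
  proof (intro nn_integral_mono)
    fix x
    have "(F x)\<^sup>2 \<le> 2 * (G x - F x)\<^sup>2 + 2 * (G x)\<^sup>2"
      using zero_le_power2[of "F x - 2 * G x"] by (simp add: power2_eq_square algebra_simps)
    then show "ennreal ((indicator {a<..<b} x * f x)\<^sup>2) \<le> ennreal (2 * (G x - F x)\<^sup>2) + ennreal (2 * (G x)\<^sup>2)"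
      by (simp add: F_def flip: ennreal_plus)
  qed
  also have "\<dots> = 2 * (\<integral>\<^sup>+x. ennreal ((G x - F x)\<^sup>2) \<partial>lborel) + 2 * (\<integral>\<^sup>+x. ennreal ((G x)\<^sup>2) \<partial>lborel)"
    by (subst nn_integral_add) (auto simp: ennreal_mult nn_integral_cmult)
  also have "\<dots> = 2 * L2sq a b (\<lambda>x. g x - f x) + 2 * L2sq a b g"
    unfolding L2sq_eq F_def G_def by (simp add: right_diff_distrib)
  finally show ?thesis .
qed

lemma L2sq_le_Hsq: "L2sq a b f \<le> Hsq a b \<mu> f"
  unfolding Hsq_def by simp

text \<open>The estimate passes from test functions to the extension by continuity: along a test sequence
  \<open>\<phi> k \<rightarrow> u\<close> in \<open>H^\<mu>\<close> both \<open>\<phi> k \<rightarrow> u\<close> and \<open>D (\<phi> k) \<rightarrow> v\<close> in \<open>L2\<close>.\<close>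
lemma L2sq_le_ext_value:
  fixes D :: "(real \<Rightarrow> real) \<Rightarrow> real \<Rightarrow> real"
  assumes measurable_D: "\<And>\<phi>. \<phi> \<in> test_fun a b \<Longrightarrow> D \<phi> \<in> borel_measurable borel"
    and bound: "\<And>\<phi>. \<phi> \<in> test_fun a b \<Longrightarrow> L2sq a b \<phi> \<le> ennreal C * L2sq a b (D \<phi>)"
    and "0 \<le> C" and "u \<in> H0 a b \<mu>" and "ext_value a b \<mu> D u v"
  shows "L2sq a b u \<le> ennreal (4 * C) * L2sq a b v"
proof -
  obtain \<phi> where \<phi>: "\<And>k. \<phi> k \<in> test_fun a b"
    and conv: "(\<lambda>k. Hsq a b \<mu> (\<lambda>x. \<phi> k x - u x)) \<longlonglongrightarrow> 0" and u: "u \<in> L2 a b"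
    using \<open>u \<in> H0 a b \<mu>\<close> unfolding H0_def by blast
  have v: "v \<in> L2 a b" and conv_D: "(\<lambda>k. L2sq a b (\<lambda>x. D (\<phi> k) x - v x)) \<longlonglongrightarrow> 0"
    using \<open>ext_value a b \<mu> D u v\<close> \<phi> conv unfolding ext_value_def by blast+
  have [measurable]: "(\<lambda>x. indicator {a<..<b} x * u x) \<in> borel_measurable lborel"
    "(\<lambda>x. indicator {a<..<b} x * v x) \<in> borel_measurable lborel"
    "D (\<phi> k) \<in> borel_measurable borel" "\<phi> k \<in> borel_measurable borel" for k
    using u v measurable_D[OF \<phi>] continuous_on_test_fun[OF \<phi>]
    by (auto simp: L2_def intro: borel_measurable_continuous_onI)
  have conv_\<phi>: "(\<lambda>k. L2sq a b (\<lambda>x. \<phi> k x - u x)) \<longlonglongrightarrow> 0"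
    by (rule tendsto_sandwich[OF _ _ tendsto_const conv]) (auto simp: L2sq_le_Hsq)
  have D_sym: "L2sq a b (\<lambda>x. v x - D (\<phi> k) x) = L2sq a b (\<lambda>x. D (\<phi> k) x - v x)" for k
    unfolding L2sq_def by (simp add: power2_commute)
  have "L2sq a b u \<le> 2 * L2sq a b (\<lambda>x. \<phi> k x - u x)
      + 2 * (ennreal C * (2 * L2sq a b (\<lambda>x. D (\<phi> k) x - v x) + 2 * L2sq a b v))" for k
  proof -
    have "L2sq a b u \<le> 2 * L2sq a b (\<lambda>x. \<phi> k x - u x) + 2 * L2sq a b (\<phi> k)"
      by (rule L2sq_le_diff_add) measurable
    also have "L2sq a b (\<phi> k) \<le> ennreal C * L2sq a b (D (\<phi> k))"
      by (rule bound[OF \<phi>])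
    also have "L2sq a b (D (\<phi> k)) \<le> 2 * L2sq a b (\<lambda>x. D (\<phi> k) x - v x) + 2 * L2sq a b v"
      unfolding D_sym[symmetric] by (rule L2sq_le_diff_add) measurable
    finally show ?thesis
      by (simp add: add_left_mono mult_left_mono)
  qed
  moreover have "(\<lambda>k. 2 * L2sq a b (\<lambda>x. \<phi> k x - u x)
        + 2 * (ennreal C * (2 * L2sq a b (\<lambda>x. D (\<phi> k) x - v x) + 2 * L2sq a b v)))
      \<longlonglongrightarrow> 2 * 0 + 2 * (ennreal C * (2 * 0 + 2 * L2sq a b v))"
    using v by (intro tendsto_intros tendsto_mult_ennreal conv_\<phi> conv_D)
               (auto simp: L2_def ennreal_mult_eq_top_iff)
  ultimately have "L2sq a b u \<le> 2 * 0 + 2 * (ennreal C * (2 * 0 + 2 * L2sq a b v))"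
    by (intro LIMSEQ_le_const) auto
  also have "\<dots> = ennreal (4 * C) * L2sq a b v"
    using \<open>0 \<le> C\<close> by (simp add: ennreal_mult mult_ac)
  finally show ?thesis .
qed

theorem lemma4:
  fixes a b lam \<mu> :: real
  assumes "a < b" and "0 \<le> lam" and "0 < \<mu>" and "\<mu> \<le> 1" and "\<mu> \<noteq> 1/2"
  shows "(\<exists>C>0. \<forall>u v. u \<in> H0 a b \<mu> \<and> ext_value a b \<mu> (DL a \<mu> lam) u v
             \<longrightarrow> L2sq a b u \<le> ennreal C * L2sq a b v) \<and>
         (\<exists>C>0. \<forall>u v. u \<in> H0 a b \<mu> \<and> ext_value a b \<mu> (DR b \<mu> lam) u v
             \<longrightarrow> L2sq a b u \<le> ennreal C * L2sq a b v)"
proof -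
  define C where "C = exp (2 * lam * (b - a)) * (Gamma (real (ord_n \<mu>) - \<mu>))\<^sup>2 * inversion_const \<mu> (b - a)"
  have C: "0 < C"
    using Gamma_ord_n_pos[OF assms(3,4)] inversion_const_pos[OF assms(3,4)] \<open>a < b\<close> by (simp add: C_def)
  have "L2sq a b u \<le> ennreal (4 * C) * L2sq a b v"
    if "u \<in> H0 a b \<mu>" "ext_value a b \<mu> (DL a \<mu> lam) u v" for u v
  proof (rule L2sq_le_ext_value[OF _ _ _ that])
    show "DL a \<mu> lam \<phi> \<in> borel_measurable borel" if "\<phi> \<in> test_fun a b" for \<phi>
      using continuous_on_DL_test_fun[OF that assms(3,4)] by (rule borel_measurable_continuous_onI)
    show "L2sq a b \<phi> \<le> ennreal C * L2sq a b (DL a \<mu> lam \<phi>)" if "\<phi> \<in> test_fun a b" for \<phi>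
      unfolding C_def by (rule L2sq_le_DL_test_fun[OF assms(1-4) that])
  qed (use C in simp)
  moreover have "L2sq a b u \<le> ennreal (4 * C) * L2sq a b v"
    if "u \<in> H0 a b \<mu>" "ext_value a b \<mu> (DR b \<mu> lam) u v" for u v
  proof (rule L2sq_le_ext_value[OF _ _ _ that])
    show "DR b \<mu> lam \<phi> \<in> borel_measurable borel" if "\<phi> \<in> test_fun a b" for \<phi>
      using continuous_on_DR_test_fun[OF that assms(3,4)] by (rule borel_measurable_continuous_onI)
    show "L2sq a b \<phi> \<le> ennreal C * L2sq a b (DR b \<mu> lam \<phi>)" if "\<phi> \<in> test_fun a b" for \<phi>
      unfolding C_def by (rule L2sq_le_DR_test_fun[OF assms(1-4) that])
  qed (use C in simp)
  ultimately show ?thesis using C by (intro conjI exI[of _ "4 * C"]) auto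
qed

end
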